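(* Let $n\ge 1$ and $\bar\gamma=(\gamma_1,\dots,\gamma_n)\in\mathbb{N}^n$. Let $s_1,\dots,s_n$ be i.i.d. random variables with $\Pr[s_i=k]=2^{-(k+1)}$ for $k=0,1,2,\dots$, and let $A(\bar\gamma)$ be the event that the closed intervals $[s_i,s_i+\gamma_i]$, $i=1,\dots,n$, are pairwise disjoint. Then $$\Pr[A(\bar\gamma)]=\frac{2^{-\left(\binom{n+1}{2}-1\right)}}{\prod_{i=1}^{n-1}\left(1-2^{-(n+1-i)}\right)}\sum_{\sigma\in \mathrm{Sym}_n}\prod_{i=1}^{n-1}2^{-(n-i)\gamma_{\sigma(i)}},$$ where $\mathrm{Sym}_n$ is the set of all permutations of $\{1,\dots,n\}$.
   Context: $\mathbb{N}=\{0,1,2,\dots\}$. *)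

theory Defs
  imports "HOL-Probability.Probability" "HOL-Combinatorics.Permutations"
begin

definition iid_geom :: "nat \<Rightarrow> (nat \<Rightarrow> nat) pmf" where
  "iid_geom n = Pi_pmf {1..n} 0 (\<lambda>_. geometric_pmf (1/2))"

definition event_A :: "nat \<Rightarrow> (nat \<Rightarrow> nat) \<Rightarrow> (nat \<Rightarrow> nat) set" where
  "event_A n \<gamma> = {s. \<forall>i\<in>{1..n}. \<forall>j\<in>{1..n}. i \<noteq> j \<longrightarrow>
      {real (s i)..real (s i) + real (\<gamma> i)} \<inter> {real (s j)..real (s j) + real (\<gamma> j)} = {}}"

end

theory Submission
  imports Defs "HOL-Combinatorics.Multiset_Permutations"
begin

(* We work with an arbitrary geometric parameter p (0 < p \<le> 1, q = 1 - p) and an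
   arbitrary finite index set I.  Call s "separated" if the integer intervals
   [s_i, s_i + g_i] (i \<in> I) are pairwise disjoint.  Splitting a separated s
   according to the index j carrying the smallest start point a = s_j, the other
   start points shifted down by c = a + g_j + 1 form a separated configuration on
   I - {j}; by memorylessness this shift multiplies probabilities by q^(c |I-{j}|).
   Summing the geometric series over a gives the recursion

     P(I) = \<Sum>j\<in>I. p q^m q^(m g_j) / (1 - q^(m+1)) P(I - {j}),      m = |I| - 1,

   which unrolls to P(I) = C(p,|I|) \<Sum>_{xs \<in> orderings of I} \<Prod>_k q^((|I|-1-k) g(xs!k)).
   Finally p = 1/2 is substituted, the orderings of {1..n} are identified with the
   permutations of {1..n}, and the constant C is brought into closed form. *)

definition geom_product :: "real \<Rightarrow> nat set \<Rightarrow> (nat \<Rightarrow> nat) pmf" where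
  "geom_product p I = Pi_pmf I 0 (\<lambda>_. geometric_pmf p)"

definition supported_on :: "nat set \<Rightarrow> (nat \<Rightarrow> nat) set" where
  "supported_on I = {f. \<forall>x. x \<notin> I \<longrightarrow> f x = 0}"

definition separated :: "nat set \<Rightarrow> (nat \<Rightarrow> nat) \<Rightarrow> (nat \<Rightarrow> nat) set" where
  "separated I g = {s. \<forall>i\<in>I. \<forall>k\<in>I. i \<noteq> k \<longrightarrow> s i + g i < s k \<or> s k + g k < s i}"

definition put_first :: "nat \<Rightarrow> nat set \<Rightarrow> nat \<Rightarrow> nat \<Rightarrow> (nat \<Rightarrow> nat) \<Rightarrow> nat \<Rightarrow> nat" where
  "put_first j A a c t = (\<lambda>i. if i = j then a else if i \<in> A then t i + c else 0)"

definition first_at :: "nat set \<Rightarrow> (nat \<Rightarrow> nat) \<Rightarrow> nat \<Rightarrow> nat \<Rightarrow> (nat \<Rightarrow> nat) set" where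
  "first_at I g j a =
     put_first j (I - {j}) a (a + g j + 1) ` (separated (I - {j}) g \<inter> supported_on (I - {j}))"

fun order_weight :: "real \<Rightarrow> (nat \<Rightarrow> nat) \<Rightarrow> nat list \<Rightarrow> real" where
  "order_weight q g [] = 1"
| "order_weight q g (x # xs) = q ^ (length xs * g x) * order_weight q g xs"

definition separation_const :: "real \<Rightarrow> nat \<Rightarrow> real" where
  "separation_const p n = (\<Prod>m<n. p * (1 - p) ^ m / (1 - (1 - p) ^ Suc m))"

lemma separation_const_Suc:
  "separation_const p (Suc n) = separation_const p n * (p * (1 - p) ^ n / (1 - (1 - p) ^ Suc n))"
  by (simp add: separation_const_def)


section \<open>Configurations and the first-minimum decomposition\<close>

lemma inj_on_put_first:
  assumes "j \<notin> A"
  shows "inj_on (put_first j A a c) (supported_on A)"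
proof
  fix s t assume s: "s \<in> supported_on A" and t: "t \<in> supported_on A"
    and eq: "put_first j A a c s = put_first j A a c t"
  show "s = t"
  proof
    fix i
    show "s i = t i"
    proof (cases "i \<in> A")
      case True
      with assms have "put_first j A a c s i = put_first j A a c t i" "i \<noteq> j"
        using eq by auto
      with True show ?thesis by (simp add: put_first_def)
    next
      case False
      with s t show ?thesis by (simp add: supported_on_def)
    qed
  qed
qed

lemma first_at_start: "s \<in> first_at I g j a \<Longrightarrow> s j = a"
  by (auto simp: first_at_def put_first_def)

lemma first_at_others_later: "s \<in> first_at I g j a \<Longrightarrow> i \<in> I \<Longrightarrow> i \<noteq> j \<Longrightarrow> a < s i"
  by (auto simp: first_at_def put_first_def)

lemma disjoint_first_at_start: "disjoint_family (first_at I g j)"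
  unfolding disjoint_family_on_def using first_at_start by blast

lemma disjoint_first_at_index: "disjoint_family_on (\<lambda>j. \<Union>a. first_at I g j a) I"
  unfolding disjoint_family_on_def
proof (intro ballI impI)
  fix j k assume jk: "j \<in> I" "k \<in> I" "j \<noteq> k"
  show "(\<Union>a. first_at I g j a) \<inter> (\<Union>a. first_at I g k a) = {}"
  proof (rule ccontr)
    assume "(\<Union>a. first_at I g j a) \<inter> (\<Union>a. first_at I g k a) \<noteq> {}"
    then obtain s a b where "s \<in> first_at I g j a" "s \<in> first_at I g k b" by blast
    then show False
      using first_at_start first_at_others_later jk by (metis less_asym)
  qed
qed

text \<open>Every separated configuration has a unique first interval: splitting by its index
  \<open>j\<close> and start point \<open>a\<close> decomposes the separated configurations.\<close>
lemma separated_decomposition: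
  assumes fin: "finite I" and ne: "I \<noteq> {}"
  shows "separated I g \<inter> supported_on I = (\<Union>j\<in>I. \<Union>a. first_at I g j a)"
proof
  show "(\<Union>j\<in>I. \<Union>a. first_at I g j a) \<subseteq> separated I g \<inter> supported_on I"
  proof (unfold first_at_def, safe)
    fix j a t assume j: "j \<in> I"
      and t: "t \<in> separated (I - {j}) g" "t \<in> supported_on (I - {j})"
    show "put_first j (I - {j}) a (a + g j + 1) t \<in> supported_on I"
      using j by (auto simp: put_first_def supported_on_def)
    show "put_first j (I - {j}) a (a + g j + 1) t \<in> separated I g"
      unfolding separated_def
    proof (intro CollectI ballI impI)
      fix i k assume "i \<in> I" "k \<in> I" "i \<noteq> k"
      with t(1) show "put_first j (I - {j}) a (a + g j + 1) t i + g i < put_first j (I - {j}) a (a + g j + 1) t k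
          \<or> put_first j (I - {j}) a (a + g j + 1) t k + g k < put_first j (I - {j}) a (a + g j + 1) t i"
        unfolding separated_def put_first_def by auto
    qed
  qed
next
  show "separated I g \<inter> supported_on I \<subseteq> (\<Union>j\<in>I. \<Union>a. first_at I g j a)"
  proof
    fix s assume s: "s \<in> separated I g \<inter> supported_on I"
    have "Min (s ` I) \<in> s ` I" using fin ne by (intro Min_in) auto
    then obtain j where j: "j \<in> I" "s j = Min (s ` I)" by auto
    define c where "c = s j + g j + 1"
    define t where "t = (\<lambda>i. if i \<in> I - {j} then s i - c else 0)"
    have later: "c \<le> s i" if "i \<in> I - {j}" for i
    proof -
      have "s j \<le> s i" using j that fin by auto
      moreover have "s i + g i < s j \<or> s j + g j < s i"
        using s that j(1) unfolding separated_def by blast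
      ultimately show ?thesis unfolding c_def by auto
    qed
    have "s = put_first j (I - {j}) (s j) c t"
      using later s by (auto simp: put_first_def t_def supported_on_def)
    moreover have "t \<in> supported_on (I - {j})"
      by (auto simp: t_def supported_on_def)
    moreover have "t \<in> separated (I - {j}) g"
      unfolding separated_def
    proof (intro CollectI ballI impI)
      fix i k assume ik: "i \<in> I - {j}" "k \<in> I - {j}" "i \<noteq> k"
      then have "s i + g i < s k \<or> s k + g k < s i" using s unfolding separated_def by auto
      then show "t i + g i < t k \<or> t k + g k < t i"
        using later[OF ik(1)] later[OF ik(2)] ik by (auto simp: t_def)
    qed
    ultimately show "s \<in> (\<Union>j\<in>I. \<Union>a. first_at I g j a)"
      using j(1) unfolding first_at_def c_def by blast
  qed
qed


section \<open>Probabilities under the product of geometric laws\<close>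

context
  fixes p :: real
  assumes p: "0 < p" "p \<le> 1"
begin

lemma pmf_geom_product:
  "finite I \<Longrightarrow> pmf (geom_product p I) f =
     (if f \<in> supported_on I then \<Prod>x\<in>I. (1 - p) ^ f x * p else 0)"
  using p unfolding geom_product_def supported_on_def by (auto simp: pmf_Pi)

lemma measure_geom_product_restrict:
  "finite I \<Longrightarrow> measure (geom_product p I) X = measure (geom_product p I) (X \<inter> supported_on I)"
  by (rule measure_prob_cong_0) (auto simp: pmf_geom_product)

text \<open>Memorylessness, pointwise: shifting the indices of \<open>A\<close> up by \<open>c\<close> costs \<open>q^(c |A|)\<close>.\<close>
lemma pmf_put_first:
  assumes fin: "finite A" and j: "j \<notin> A" and t: "t \<in> supported_on A"
  shows "pmf (geom_product p (insert j A)) (put_first j A a c t)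
       = (1 - p) ^ a * p * (1 - p) ^ (c * card A) * pmf (geom_product p A) t"
proof -
  have "(\<Prod>x\<in>A. (1 - p) ^ put_first j A a c t x * p) = (\<Prod>x\<in>A. (1 - p) ^ c * ((1 - p) ^ t x * p))"
    using j by (intro prod.cong) (auto simp: put_first_def power_add)
  also have "\<dots> = (1 - p) ^ (c * card A) * (\<Prod>x\<in>A. (1 - p) ^ t x * p)"
    by (simp add: prod.distrib power_mult)
  finally have "(\<Prod>x\<in>A. (1 - p) ^ put_first j A a c t x * p)
      = (1 - p) ^ (c * card A) * (\<Prod>x\<in>A. (1 - p) ^ t x * p)" .
  moreover have "put_first j A a c t \<in> supported_on (insert j A)"
    by (auto simp: put_first_def supported_on_def)
  ultimately show ?thesis
    using fin j t by (simp add: pmf_geom_product put_first_def)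
qed

lemma measure_put_first:
  assumes fin: "finite A" and j: "j \<notin> A"
  shows "measure (geom_product p (insert j A)) (put_first j A a c ` (E \<inter> supported_on A))
       = (1 - p) ^ a * p * (1 - p) ^ (c * card A) * measure (geom_product p A) E"
proof -
  let ?M = "geom_product p (insert j A)" and ?K = "(1 - p) ^ a * p * (1 - p) ^ (c * card A)"
  have "measure ?M (put_first j A a c ` (E \<inter> supported_on A))
      = infsetsum (pmf ?M) (put_first j A a c ` (E \<inter> supported_on A))"
    by (rule measure_pmf_conv_infsetsum)
  also have "\<dots> = infsetsum (\<lambda>t. pmf ?M (put_first j A a c t)) (E \<inter> supported_on A)"
    using inj_on_put_first[OF j] by (intro infsetsum_reindex) (auto intro: inj_on_subset)
  also have "\<dots> = infsetsum (\<lambda>t. ?K * pmf (geom_product p A) t) (E \<inter> supported_on A)"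
    using pmf_put_first[OF fin j] by (intro infsetsum_cong) auto
  also have "\<dots> = ?K * infsetsum (pmf (geom_product p A)) (E \<inter> supported_on A)"
    by (rule infsetsum_cmult_right) auto
  also have "infsetsum (pmf (geom_product p A)) (E \<inter> supported_on A) = measure (geom_product p A) E"
    using measure_geom_product_restrict[OF fin, of E] by (simp add: measure_pmf_conv_infsetsum)
  finally show ?thesis .
qed

text \<open>The probability that \<open>j\<close> comes first (at any start point): a geometric series in \<open>a\<close>.\<close>
lemma measure_first_index:
  assumes fin: "finite I" and j: "j \<in> I"
  defines "m \<equiv> card I - 1"
  shows "measure (geom_product p I) (\<Union>a. first_at I g j a)
       = p * (1 - p) ^ m * (1 - p) ^ (m * g j) / (1 - (1 - p) ^ Suc m)
         * measure (geom_product p (I - {j})) (separated (I - {j}) g)"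
proof -
  define P where "P = measure (geom_product p (I - {j})) (separated (I - {j}) g)"
  define q where "q = 1 - p"
  have q: "0 \<le> q" "q < 1" using p by (auto simp: q_def)
  have card_rest: "card (I - {j}) = m" using j fin by (simp add: m_def)
  have piece: "measure (geom_product p I) (first_at I g j a)
      = (q ^ Suc m) ^ a * (p * q ^ m * q ^ (m * g j) * P)" for a
  proof -
    have "insert j (I - {j}) = I" using j by auto
    then have "measure (geom_product p I) (first_at I g j a)
        = q ^ a * p * q ^ ((a + g j + 1) * m) * P"
      using measure_put_first[of "I - {j}" j a "a + g j + 1" "separated (I - {j}) g"] fin card_rest
      unfolding first_at_def P_def q_def by simp
    also have "\<dots> = (q ^ Suc m) ^ a * (p * q ^ m * q ^ (m * g j) * P)"
      by (simp add: power_add power_mult[symmetric] algebra_simps)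
    finally show ?thesis .
  qed
  have "(\<lambda>a. measure (geom_product p I) (first_at I g j a))
          sums measure (geom_product p I) (\<Union>a. first_at I g j a)"
    by (rule measure_pmf.finite_measure_UNION) (auto simp: disjoint_first_at_start)
  moreover have "(\<lambda>a. (q ^ Suc m) ^ a * (p * q ^ m * q ^ (m * g j) * P))
          sums (1 / (1 - q ^ Suc m) * (p * q ^ m * q ^ (m * g j) * P))"
    using q power_strict_mono[of q 1 "Suc m"]
    by (intro sums_mult2 geometric_sums) (auto simp: power_le_one)
  ultimately show ?thesis
    unfolding piece P_def q_def by (simp add: sums_unique2)
qed

lemma measure_separated_recursion:
  assumes fin: "finite I" and ne: "I \<noteq> {}"
  shows "measure (geom_product p I) (separated I g)
       = (\<Sum>j\<in>I. p * (1 - p) ^ (card I - 1) * (1 - p) ^ ((card I - 1) * g j) / (1 - (1 - p) ^ card I)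
            * measure (geom_product p (I - {j})) (separated (I - {j}) g))"
proof -
  have card: "Suc (card I - 1) = card I" using fin ne by (simp add: card_gt_0_iff)
  have "measure (geom_product p I) (separated I g)
      = measure (geom_product p I) (\<Union>j\<in>I. \<Union>a. first_at I g j a)"
    using measure_geom_product_restrict[OF fin] separated_decomposition[OF fin ne] by metis
  also have "\<dots> = (\<Sum>j\<in>I. measure (geom_product p I) (\<Union>a. first_at I g j a))"
    using fin disjoint_first_at_index by (intro measure_pmf.finite_measure_finite_Union) auto
  finally show ?thesis
    using measure_first_index[OF fin] card by (simp cong: sum.cong)
qed

text \<open>Orderings satisfy the same recursion, over the first element of the list.\<close>
lemma sum_order_weight_recursion:
  assumes fin: "finite I" and ne: "I \<noteq> {}"
  shows "(\<Sum>xs\<in>permutations_of_set I. order_weight q g xs)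
       = (\<Sum>j\<in>I. q ^ ((card I - 1) * g j) * (\<Sum>xs\<in>permutations_of_set (I - {j}). order_weight q g xs))"
proof -
  have len: "length xs = card I - 1" if "j \<in> I" "xs \<in> permutations_of_set (I - {j})" for j xs
    using that fin length_finite_permutations_of_set by fastforce
  have "(\<Sum>xs\<in>permutations_of_set I. order_weight q g xs)
      = (\<Sum>j\<in>I. \<Sum>xs\<in>(\<lambda>xs. j # xs) ` permutations_of_set (I - {j}). order_weight q g xs)"
    unfolding permutations_of_set_nonempty[OF ne] using fin by (intro sum.UNION_disjoint) auto
  also have "\<dots> = (\<Sum>j\<in>I. \<Sum>xs\<in>permutations_of_set (I - {j}). order_weight q g (j # xs))"
    by (simp add: sum.reindex inj_on_def o_def)
  finally show ?thesis
    using len by (simp add: sum_distrib_left cong: sum.cong)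
qed

theorem measure_separated:
  "finite I \<Longrightarrow> measure (geom_product p I) (separated I g)
     = separation_const p (card I) * (\<Sum>xs\<in>permutations_of_set I. order_weight (1 - p) g xs)"
proof (induction "card I" arbitrary: I)
  case 0
  then show ?case by (simp add: separated_def separation_const_def)
next
  case (Suc n)
  then have ne: "I \<noteq> {}" by auto
  have IH: "measure (geom_product p (I - {j})) (separated (I - {j}) g)
      = separation_const p n * (\<Sum>xs\<in>permutations_of_set (I - {j}). order_weight (1 - p) g xs)"
    if "j \<in> I" for j
  proof -
    have "card (I - {j}) = n" using Suc.hyps(2) Suc.prems that by simp
    then show ?thesis using Suc.hyps(1)[of "I - {j}"] Suc.prems by simp
  qed
  have "measure (geom_product p I) (separated I g)
      = (\<Sum>j\<in>I. p * (1 - p) ^ n * (1 - p) ^ (n * g j) / (1 - (1 - p) ^ Suc n)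
           * (separation_const p n * (\<Sum>xs\<in>permutations_of_set (I - {j}). order_weight (1 - p) g xs)))"
    using measure_separated_recursion[OF Suc.prems ne] IH Suc.hyps(2)[symmetric]
    by (simp cong: sum.cong)
  also have "\<dots> = separation_const p (Suc n)
      * (\<Sum>j\<in>I. (1 - p) ^ (n * g j) * (\<Sum>xs\<in>permutations_of_set (I - {j}). order_weight (1 - p) g xs))"
    by (simp add: sum_distrib_left separation_const_Suc mult_ac)
  also have "\<dots> = separation_const p (Suc n) * (\<Sum>xs\<in>permutations_of_set I. order_weight (1 - p) g xs)"
    using sum_order_weight_recursion[OF Suc.prems ne] Suc.hyps(2)[symmetric] by simp
  finally show ?case using Suc.hyps(2) by simp
qed

end


section \<open>The case \<open>p = 1/2\<close> on \<open>{1..n}\<close>\<close>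

lemma nat_intervals_disjoint_iff:
  "{real a..real a + real g} \<inter> {real b..real b + real h} = {} \<longleftrightarrow> a + g < b \<or> b + h < (a::nat)"
proof
  assume "{real a..real a + real g} \<inter> {real b..real b + real h} = {}"
  moreover have "real (max a b) \<in> {real a..real a + real g} \<inter> {real b..real b + real h}"
    if "\<not> (a + g < b \<or> b + h < a)"
    using that by (auto simp: max_def)
  ultimately show "a + g < b \<or> b + h < a" by blast
next
  assume "a + g < b \<or> b + h < a"
  then have "real a + real g < real b \<or> real b + real h < real a"
    by (metis of_nat_add of_nat_less_iff)
  then show "{real a..real a + real g} \<inter> {real b..real b + real h} = {}" by auto
qed

lemma event_A_eq_separated: "event_A n g = separated {1..n} g"
  unfolding event_A_def separated_def nat_intervals_disjoint_iff by blast

lemma order_weight_map_upt: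
  "order_weight q g (map f [a..<b]) = (\<Prod>i\<in>{a..<b}. q ^ ((b - 1 - i) * g (f i)))"
proof (induction "b - a" arbitrary: a)
  case 0
  then show ?case by simp
next
  case (Suc k)
  then have "a < b" by simp
  with Suc show ?case by (simp add: upt_conv_Cons prod.atLeast_Suc_lessThan)
qed

lemma bij_betw_permutes_orderings:
  "bij_betw (\<lambda>\<sigma>. map \<sigma> [1..<Suc n]) {\<sigma>. \<sigma> permutes {1..n}} (permutations_of_set {1..n})"
proof -
  let ?f = "\<lambda>\<sigma>. map \<sigma> [1..<Suc n]"
  have inj: "inj_on ?f {\<sigma>. \<sigma> permutes {1..n}}"
  proof
    fix \<sigma> \<tau> assume \<sigma>: "\<sigma> \<in> {\<sigma>. \<sigma> permutes {1..n}}" and \<tau>: "\<tau> \<in> {\<sigma>. \<sigma> permutes {1..n}}"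
      and eq: "?f \<sigma> = ?f \<tau>"
    show "\<sigma> = \<tau>"
    proof
      fix i
      show "\<sigma> i = \<tau> i"
      proof (cases "i \<in> {1..n}")
        case True
        then show ?thesis using eq by (auto simp: map_eq_conv)
      next
        case False
        then show ?thesis using \<sigma> \<tau> by (simp add: permutes_not_in)
      qed
    qed
  qed
  have "?f \<sigma> \<in> permutations_of_set {1..n}" if \<sigma>: "\<sigma> permutes {1..n}" for \<sigma>
  proof (rule permutations_of_setI)
    have "set [1..<Suc n] = {1..n}" by auto
    then show "set (?f \<sigma>) = {1..n}" by (simp only: set_map permutes_image[OF \<sigma>])
    show "distinct (?f \<sigma>)"
      using permutes_inj_on[OF \<sigma>] by (simp add: distinct_map inj_on_subset)
  qed
  moreover have "card (?f ` {\<sigma>. \<sigma> permutes {1..n}}) = card (permutations_of_set {1..n})"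
    using card_image[OF inj] card_permutations[of "{1..n}" n] by simp
  ultimately have "?f ` {\<sigma>. \<sigma> permutes {1..n}} = permutations_of_set {1..n}"
    by (intro card_subset_eq) auto
  with inj show ?thesis unfolding bij_betw_def by auto
qed

lemma sum_permutes_eq_sum_orderings:
  assumes "n \<ge> 1"
  shows "(\<Sum>\<sigma>\<in>{\<sigma>. \<sigma> permutes {1..n}}. \<Prod>i=1..n-1. q ^ ((n - i) * g (\<sigma> i)))
       = (\<Sum>xs\<in>permutations_of_set {1..n}. order_weight q g xs)"
proof -
  have upto_n: "{1..<Suc n} = insert n {1..n-1}" using assms by auto
  have "order_weight q g (map \<sigma> [1..<Suc n]) = (\<Prod>i=1..n-1. q ^ ((n - i) * g (\<sigma> i)))" for \<sigma>
    unfolding order_weight_map_upt upto_n using assms by (subst prod.insert) auto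
  then show ?thesis
    using sum.reindex_bij_betw[OF bij_betw_permutes_orderings, of "order_weight q g" n] by simp
qed

text \<open>For \<open>p = 1/2\<close> the numerators multiply to \<open>(1/2)^(1 + 2 + ... + n)\<close>.\<close>
lemma separation_const_half:
  "separation_const (1/2) n = (1/2) ^ (Suc n choose 2) / (\<Prod>m=1..n. 1 - (1/2::real) ^ m)"
proof (induction n)
  case 0
  then show ?case by (simp add: separation_const_def numeral_2_eq_2)
next
  case (Suc n)
  have "(1/2::real) ^ Suc n \<le> 1/2" using power_le_one[of "1/2::real" n] by simp
  then have "1 - (1/2::real) ^ Suc n \<noteq> 0" by linarith
  moreover have "Suc (Suc n) choose 2 = (Suc n choose 2) + Suc n"
    by (simp add: numeral_2_eq_2)
  ultimately show ?case
    using Suc by (simp add: separation_const_def prod.nat_ivl_Suc' power_add)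
qed

text \<open>The constant in the form used by the theorem: the factor \<open>1 - 1/2\<close> for \<open>m = 1\<close> is
  cancelled against one power of \<open>1/2\<close>.\<close>
lemma separation_const_half_closed:
  assumes "n \<ge> 1"
  shows "separation_const (1/2) n
       = (1/2::real) ^ ((Suc n choose 2) - 1) / (\<Prod>i=1..n-1. 1 - (1/2::real) ^ (n + 1 - i))"
proof -
  define f where "f = (\<lambda>m::nat. 1 - (1/2::real) ^ m)"
  have first_factor: "(\<Prod>m=1..n. f m) = (1/2) * (\<Prod>m=2..n. f m)"
    using assms by (subst prod.atLeast_Suc_atMost) (auto simp: f_def numeral_2_eq_2)
  have reverse: "(\<Prod>i=1..n-1. f (n + 1 - i)) = (\<Prod>m=2..n. f m)"
    by (rule prod.reindex_bij_witness[of _ "\<lambda>m. n + 1 - m" "\<lambda>i. n + 1 - i"]) auto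
  have "Suc n choose 2 = Suc ((Suc n choose 2) - 1)"
    using assms by (simp add: numeral_2_eq_2)
  then have power: "(1/2::real) ^ (Suc n choose 2) = (1/2) * (1/2) ^ ((Suc n choose 2) - 1)"
    by (metis power_Suc)
  show ?thesis
    using separation_const_half[of n] first_factor reverse power unfolding f_def by simp
qed

theorem theorem2:
  fixes n :: nat and \<gamma> :: "nat \<Rightarrow> nat"
  assumes "n \<ge> 1"
  shows "measure_pmf.prob (iid_geom n) (event_A n \<gamma>) =
    (1/2::real) ^ ((Suc n choose 2) - 1) / (\<Prod>i=1..n-1. (1 - (1/2::real) ^ (n + 1 - i)))
    * (\<Sum>\<sigma>\<in>{\<sigma>. \<sigma> permutes {1..n}}. \<Prod>i=1..n-1. (1/2::real) ^ ((n - i) * \<gamma> (\<sigma> i)))"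
proof -
  have "measure_pmf.prob (iid_geom n) (event_A n \<gamma>)
      = separation_const (1/2) n * (\<Sum>xs\<in>permutations_of_set {1..n}. order_weight (1/2) \<gamma> xs)"
    using measure_separated[of "1/2" "{1..n}" \<gamma>]
    by (simp add: iid_geom_def geom_product_def event_A_eq_separated)
  then show ?thesis
    using separation_const_half_closed[OF assms] sum_permutes_eq_sum_orderings[OF assms]
    by simp
qed

end
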